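(* In the setting below, let $(x_f,y_f,\theta_f)$ be a goal pose that is reached by at least one $2\pi$-arc $LSL$ or $RSR$ path. Then the minimum travel time over all $4\pi$-arc $LSL$ and $RSR$ paths reaching this goal pose is less than or equal to the minimum travel time over all $2\pi$-arc $LSL$ and $RSR$ paths reaching it.
   Context: Setting: a vehicle moves in the plane at unit speed with minimum turning radius $r>0$, in a steady current $(w_x,w_y)$ with speed $v_w=\sqrt{w_x^2+w_y^2}\in(0,1)$. The start pose is $(0,0,0)$ and the goal pose is $(x_f,y_f,\theta_f)$ with $\theta_f\in[0,2\pi)$. An $LSL$ path has parameters $(\alpha,\beta,\gamma)$ with $\alpha,\gamma\ge0$ and $\beta\ge0$: a left arc of angle $\alpha$ of radius $r$, a straight segment of length $\beta$, and a left arc of angle $\gamma$, in the frame moving with the current. Its travel time is $T=r(\alpha+\gamma)+\beta$. It reaches the goal iff for some $k\in\mathbb{Z}$: $\alpha+\gamma=2k\pi+\theta_f$, $x_f-w_xT=r\sin\theta_f+\beta\cos\alpha$, and $y_f-w_yT=r(1-\cos\theta_f)+\beta\sin\alpha$. An $RSR$ path is the analogous path with right arcs, with $T=r(\alpha+\gamma)+\beta$. It reaches the goal iff for some $k\in\mathbb{Z}$: $-\alpha-\gamma=2k\pi+\theta_f$, $x_f-w_xT=-r\sin\theta_f+\beta\cos\alpha$, and $y_f-w_yT=-r(1-\cos\theta_f)-\beta\sin\alpha$. A path is a $2\pi$-arc path if $\alpha,\gamma\in[0,2\pi)$, and a $4\pi$-arc path if $\alpha,\gamma\in[0,4\pi)$.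 *)

theory Defs
  imports Complex_Main
begin

definition travel_time :: "real \<Rightarrow> real \<Rightarrow> real \<Rightarrow> real \<Rightarrow> real" where
  "travel_time r \<alpha> \<beta> \<gamma> = r * (\<alpha> + \<gamma>) + \<beta>"

text \<open>An LSL path (alpha, beta, gamma) reaches the goal (xf, yf, thf) from (0,0,0)
  in the current (wx, wy).\<close>
definition LSL_reaches ::
  "real \<Rightarrow> real \<Rightarrow> real \<Rightarrow> real \<Rightarrow> real \<Rightarrow> real \<Rightarrow> real \<Rightarrow> real \<Rightarrow> real \<Rightarrow> bool" where
  "LSL_reaches r wx wy xf yf thf \<alpha> \<beta> \<gamma> \<longleftrightarrow>
     \<alpha> \<ge> 0 \<and> \<beta> \<ge> 0 \<and> \<gamma> \<ge> 0 \<and>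
     (\<exists>k::int. \<alpha> + \<gamma> = 2 * of_int k * pi + thf) \<and>
     xf - wx * travel_time r \<alpha> \<beta> \<gamma> = r * sin thf + \<beta> * cos \<alpha> \<and>
     yf - wy * travel_time r \<alpha> \<beta> \<gamma> = r * (1 - cos thf) + \<beta> * sin \<alpha>"

definition RSR_reaches ::
  "real \<Rightarrow> real \<Rightarrow> real \<Rightarrow> real \<Rightarrow> real \<Rightarrow> real \<Rightarrow> real \<Rightarrow> real \<Rightarrow> real \<Rightarrow> bool" where
  "RSR_reaches r wx wy xf yf thf \<alpha> \<beta> \<gamma> \<longleftrightarrow>
     \<alpha> \<ge> 0 \<and> \<beta> \<ge> 0 \<and> \<gamma> \<ge> 0 \<and>
     (\<exists>k::int. - \<alpha> - \<gamma> = 2 * of_int k * pi + thf) \<and>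
     xf - wx * travel_time r \<alpha> \<beta> \<gamma> = - r * sin thf + \<beta> * cos \<alpha> \<and>
     yf - wy * travel_time r \<alpha> \<beta> \<gamma> = - r * (1 - cos thf) - \<beta> * sin \<alpha>"

text \<open>Travel times of all LSL and RSR paths reaching the goal whose arc angles
  alpha, gamma lie in [0, B).  B = 2 pi gives the 2pi-arc paths, B = 4 pi the 4pi-arc paths.\<close>
definition arc_path_times ::
  "real \<Rightarrow> real \<Rightarrow> real \<Rightarrow> real \<Rightarrow> real \<Rightarrow> real \<Rightarrow> real \<Rightarrow> real set" where
  "arc_path_times B r wx wy xf yf thf =
     {travel_time r \<alpha> \<beta> \<gamma> | \<alpha> \<beta> \<gamma>.
        \<alpha> \<in> {0..<B} \<and> \<gamma> \<in> {0..<B} \<and>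
        (LSL_reaches r wx wy xf yf thf \<alpha> \<beta> \<gamma> \<or> RSR_reaches r wx wy xf yf thf \<alpha> \<beta> \<gamma>)}"

end

theory Submission
  imports Defs
begin

text \<open>Every 2\<pi>-arc path is a 4\<pi>-arc path, so the infimum is taken over a larger set of
  travel times; travel times are nonnegative, so that set is bounded below.\<close>

lemma arc_path_times_mono:
  assumes "B \<le> B'"
  shows "arc_path_times B r wx wy xf yf thf \<subseteq> arc_path_times B' r wx wy xf yf thf"
  using assms unfolding arc_path_times_def by fastforce

lemma travel_time_nonneg:
  assumes "r \<ge> 0" "\<alpha> \<ge> 0" "\<beta> \<ge> 0" "\<gamma> \<ge> 0"
  shows "travel_time r \<alpha> \<beta> \<gamma> \<ge> 0"
  using assms unfolding travel_time_def by simp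

lemma arc_path_times_nonneg:
  assumes "r \<ge> 0" "t \<in> arc_path_times B r wx wy xf yf thf"
  shows "t \<ge> 0"
  using assms travel_time_nonneg
  unfolding arc_path_times_def LSL_reaches_def RSR_reaches_def by auto

lemma bdd_below_arc_path_times:
  assumes "r \<ge> 0"
  shows "bdd_below (arc_path_times B r wx wy xf yf thf)"
  using arc_path_times_nonneg[OF assms] by (intro bdd_belowI[of _ 0])

theorem theorem3:
  fixes r wx wy xf yf thf :: real
  assumes "r > 0"
    and "0 < sqrt (wx\<^sup>2 + wy\<^sup>2)" and "sqrt (wx\<^sup>2 + wy\<^sup>2) < 1"
    and "0 \<le> thf" and "thf < 2 * pi"
    and "arc_path_times (2 * pi) r wx wy xf yf thf \<noteq> {}"
  shows "Inf (arc_path_times (4 * pi) r wx wy xf yf thf)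
           \<le> Inf (arc_path_times (2 * pi) r wx wy xf yf thf)"
proof (rule cInf_superset_mono)
  show "arc_path_times (2 * pi) r wx wy xf yf thf \<noteq> {}" by fact
  show "bdd_below (arc_path_times (4 * pi) r wx wy xf yf thf)"
    using \<open>r > 0\<close> by (simp add: bdd_below_arc_path_times)
  show "arc_path_times (2 * pi) r wx wy xf yf thf \<subseteq> arc_path_times (4 * pi) r wx wy xf yf thf"
    by (rule arc_path_times_mono) simp
qed

end
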